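(* Let $f:(K,\alpha_K)\to(L,\alpha_L)$ be a central extension of a perfect Hom-Leibniz $n$-algebra $(L,\alpha_L)$ with $\alpha_L$ injective, and suppose $(K,\alpha_K)$ satisfies condition (C): $[\alpha_K(k),\alpha_K(k),\alpha_K(k_3),\dots,\alpha_K(k_n)]=0$ for all $k,k_3,\dots,k_n\in K$. Then $f(Z(\alpha_K(K)))=Z(\alpha_L(L))$.
   Context: Fix a field $\mathbb K$ and $n\ge2$. A (multiplicative) Hom-Leibniz $n$-algebra is a $\mathbb K$-vector space $L$ with an $n$-linear bracket and a linear map $\alpha_L$ preserving the bracket, satisfying $[[x_1,\dots,x_n],\alpha_L(y_1),\dots,\alpha_L(y_{n-1})]=\sum_{i=1}^n[\alpha_L(x_1),\dots,[x_i,y_1,\dots,y_{n-1}],\dots,\alpha_L(x_n)]$. Homomorphisms preserve brackets and commute with twisting maps. Perfect: $L=[L,\dots,L]$. For a subspace $S$ closed under the bracket, $Z(S)$ is the set of $x\in S$ such that every bracket with $x$ in some position and all other entries in $S$ is $0$; $Z(\alpha_K(K))$ and $Z(\alpha_L(L))$ are computed inside the subalgebras $\alpha_K(K)$, $\alpha_L(L)$. A central extension of $L$ is a surjective homomorphism $f:K\to L$ with $\ker f\subseteq Z(K)$. *)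

theory Defs
  imports Complex_Main
begin

text \<open>A Hom-Leibniz n-algebra over a field of type 'k is modelled by a carrier type 'v
  (the whole type is the vector space), a scalar multiplication smult, an n-ary
  bracket br taking lists of length n, and a twisting map alpha.\<close>

definition multilinear ::
  "('k::field \<Rightarrow> 'v::ab_group_add \<Rightarrow> 'v) \<Rightarrow> nat \<Rightarrow> ('v list \<Rightarrow> 'v) \<Rightarrow> bool" where
  "multilinear smult n br \<longleftrightarrow>
     (\<forall>xs i. length xs = n \<longrightarrow> i < n \<longrightarrow>
        Vector_Spaces.linear smult smult (\<lambda>y. br (xs[i := y])))"

definition hom_leibniz_nalg ::
  "('k::field \<Rightarrow> 'v::ab_group_add \<Rightarrow> 'v) \<Rightarrow> nat \<Rightarrow> ('v list \<Rightarrow> 'v) \<Rightarrow> ('v \<Rightarrow> 'v) \<Rightarrow> bool" where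
  "hom_leibniz_nalg smult n br alpha \<longleftrightarrow>
     vector_space smult \<and>
     multilinear smult n br \<and>
     Vector_Spaces.linear smult smult alpha \<and>
     (\<forall>xs. length xs = n \<longrightarrow> alpha (br xs) = br (map alpha xs)) \<and>
     (\<forall>xs ys. length xs = n \<longrightarrow> length ys = n - 1 \<longrightarrow>
        br (br xs # map alpha ys) =
        (\<Sum>i<n. br ((map alpha xs)[i := br (xs ! i # ys)])))"

definition hom_leibniz_hom ::
  "('k::field \<Rightarrow> 'v::ab_group_add \<Rightarrow> 'v) \<Rightarrow> ('v list \<Rightarrow> 'v) \<Rightarrow> ('v \<Rightarrow> 'v) \<Rightarrow>
   ('k \<Rightarrow> 'w::ab_group_add \<Rightarrow> 'w) \<Rightarrow> ('w list \<Rightarrow> 'w) \<Rightarrow> ('w \<Rightarrow> 'w) \<Rightarrow> nat \<Rightarrow>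
   ('v \<Rightarrow> 'w) \<Rightarrow> bool" where
  "hom_leibniz_hom smultK brK alphaK smultL brL alphaL n f \<longleftrightarrow>
     Vector_Spaces.linear smultK smultL f \<and>
     (\<forall>xs. length xs = n \<longrightarrow> f (brK xs) = brL (map f xs)) \<and>
     (\<forall>x. f (alphaK x) = alphaL (f x))"

definition perfect ::
  "('k::field \<Rightarrow> 'v::ab_group_add \<Rightarrow> 'v) \<Rightarrow> nat \<Rightarrow> ('v list \<Rightarrow> 'v) \<Rightarrow> bool" where
  "perfect smult n br \<longleftrightarrow> module.span smult {br xs | xs. length xs = n} = UNIV"

definition centre :: "nat \<Rightarrow> ('v::zero list \<Rightarrow> 'v) \<Rightarrow> 'v set \<Rightarrow> 'v set" where
  "centre n br S = {x \<in> S. \<forall>xs i. length xs = n \<longrightarrow> set xs \<subseteq> S \<longrightarrow> i < n \<longrightarrow>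
                         br (xs[i := x]) = 0}"

definition central_extension ::
  "('k::field \<Rightarrow> 'v::ab_group_add \<Rightarrow> 'v) \<Rightarrow> ('v list \<Rightarrow> 'v) \<Rightarrow> ('v \<Rightarrow> 'v) \<Rightarrow>
   ('k \<Rightarrow> 'w::ab_group_add \<Rightarrow> 'w) \<Rightarrow> ('w list \<Rightarrow> 'w) \<Rightarrow> ('w \<Rightarrow> 'w) \<Rightarrow> nat \<Rightarrow>
   ('v \<Rightarrow> 'w) \<Rightarrow> bool" where
  "central_extension smultK brK alphaK smultL brL alphaL n f \<longleftrightarrow>
     hom_leibniz_hom smultK brK alphaK smultL brL alphaL n f \<and>
     surj f \<and> {x. f x = 0} \<subseteq> centre n brK UNIV"

definition condition_C :: "nat \<Rightarrow> ('v::zero list \<Rightarrow> 'v) \<Rightarrow> ('v \<Rightarrow> 'v) \<Rightarrow> bool" where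
  "condition_C n br alpha \<longleftrightarrow>
     (\<forall>k ks. length ks = n - 2 \<longrightarrow> br (alpha k # alpha k # map alpha ks) = 0)"

end

theory Submission
  imports Defs
begin

text \<open>The inclusion \<open>f(Z(\<alpha>\<^sub>K(K))) \<subseteq> Z(\<alpha>\<^sub>L(L))\<close> only uses that \<open>f \<circ> \<alpha>\<^sub>K = \<alpha>\<^sub>L \<circ> f\<close> maps
  \<open>K\<close> onto \<open>\<alpha>\<^sub>L(L)\<close>. Conversely, if \<open>\<alpha>\<^sub>L(f k)\<close> is central in \<open>\<alpha>\<^sub>L(L)\<close>, injectivity of \<open>\<alpha>\<^sub>L\<close>
  makes \<open>f k\<close> central in \<open>L\<close>, so every bracket containing \<open>k\<close> lies in \<open>ker f \<subseteq> Z(K)\<close>.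
  The set of \<open>x\<close> with \<open>[\<alpha>\<^sub>K x, \<dots>, \<alpha>\<^sub>K k, \<dots>] = 0\<close> (\<open>k\<close> not in the first slot) is a subspace
  containing \<open>ker f\<close>, and by the Hom-Leibniz identity it contains all brackets; since \<open>L\<close> is
  perfect, these generate \<open>K\<close>. Condition (C) makes the bracket skew-symmetric in its first two
  twisted slots, which handles the first slot, so \<open>\<alpha>\<^sub>K k\<close> is central in \<open>\<alpha>\<^sub>K(K)\<close>.\<close>

lemma hom_leibniz_nalgD:
  assumes "hom_leibniz_nalg smult n br alpha"
  shows "multilinear smult n br" "Vector_Spaces.linear smult smult alpha"
    and "length xs = n \<Longrightarrow> alpha (br xs) = br (map alpha xs)"
    and "length xs = n \<Longrightarrow> length ys = n - 1 \<Longrightarrow>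
      br (br xs # map alpha ys) = (\<Sum>i<n. br ((map alpha xs)[i := br (xs ! i # ys)]))"
  using assms unfolding hom_leibniz_nalg_def by auto

lemma hom_leibniz_homD:
  assumes "hom_leibniz_hom smultK brK alphaK smultL brL alphaL n f"
  shows "Vector_Spaces.linear smultK smultL f"
    and "length xs = n \<Longrightarrow> f (brK xs) = brL (map f xs)"
    and "f (alphaK x) = alphaL (f x)"
  using assms unfolding hom_leibniz_hom_def by auto

lemma central_extensionD:
  assumes "central_extension smultK brK alphaK smultL brL alphaL n f"
  shows "hom_leibniz_hom smultK brK alphaK smultL brL alphaL n f"
    and "surj f"
    and "f x = 0 \<Longrightarrow> x \<in> centre n brK UNIV"
  using assms unfolding central_extension_def by auto

lemma centreD:
  assumes "x \<in> centre n br S" "length xs = n" "set xs \<subseteq> S" "i < n"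
  shows "br (xs[i := x]) = 0"
  using assms unfolding centre_def by blast

lemma multilinearD:
  assumes "multilinear smult n br" "length xs = n" "i < n"
  shows "Vector_Spaces.linear smult smult (\<lambda>y. br (xs[i := y]))"
  using assms unfolding multilinear_def by blast

lemma multilinear_add:
  assumes "multilinear smult n br" "length xs = n" "i < n"
  shows "br (xs[i := a + b]) = br (xs[i := a]) + br (xs[i := b])"
  using multilinearD[OF assms] unfolding Vector_Spaces.linear_iff by blast

lemma condition_C_skew:
  assumes "n \<ge> 2" "multilinear smult n br" "Vector_Spaces.linear smult smult alpha"
    and "condition_C n br alpha" "length R = n - 2"
  shows "br (alpha a # alpha b # map alpha R) = - br (alpha b # alpha a # map alpha R)"
proof -
  define X where "X u v = br (u # v # map alpha R)" for u v
  have len: "length (u # v # map alpha R) = n" for u v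
    using assms(1,5) by simp
  have X_add_left: "X (u1 + u2) v = X u1 v + X u2 v" for u1 u2 v
    using multilinear_add[OF assms(2) len, of 0] assms(1) unfolding X_def by simp
  have X_add_right: "X u (v1 + v2) = X u v1 + X u v2" for u v1 v2
    using multilinear_add[OF assms(2) len, of 1] assms(1) unfolding X_def by simp
  have X_diag: "X (alpha c) (alpha c) = 0" for c
    using assms(4,5) unfolding condition_C_def X_def by blast
  have alpha_add: "alpha (a + b) = alpha a + alpha b"
    using assms(3) unfolding Vector_Spaces.linear_iff by blast
  have "0 = X (alpha (a + b)) (alpha (a + b))"
    by (rule X_diag[symmetric])
  also have "\<dots> = X (alpha a) (alpha b) + X (alpha b) (alpha a)"
    by (simp add: alpha_add X_add_left X_add_right X_diag)
  finally show ?thesis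
    unfolding X_def by (simp add: eq_neg_iff_add_eq_0)
qed

lemma subspace_containing_kernel_and_brackets_eq_UNIV:
  assumes lin: "Vector_Spaces.linear smultK smultL f" and "surj f"
    and f_br: "\<And>xs. length xs = n \<Longrightarrow> f (brK xs) = brL (map f xs)"
    and "perfect smultL n brL"
    and S: "module.subspace smultK S" "{x. f x = 0} \<subseteq> S" "{brK xs | xs. length xs = n} \<subseteq> S"
  shows "S = UNIV"
proof -
  interpret f: Vector_Spaces.linear smultK smultL f by (fact lin)
  have "{brL ys | ys. length ys = n} \<subseteq> f ` S"
  proof
    fix z assume "z \<in> {brL ys | ys. length ys = n}"
    then obtain ys where ys: "z = brL ys" "length ys = n"
      by blast
    have "map f (map (inv f) ys) = ys"
      by (simp add: \<open>surj f\<close> surj_f_inv_f map_idI)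
    then have "z = f (brK (map (inv f) ys))"
      using ys f_br[of "map (inv f) ys"] by simp
    moreover have "brK (map (inv f) ys) \<in> S"
      using ys(2) by (intro subsetD[OF S(3)]) auto
    ultimately show "z \<in> f ` S"
      by (rule image_eqI)
  qed
  then have "module.span smultL {brL ys | ys. length ys = n} \<subseteq> f ` S"
    by (rule f.vs2.span_minimal) (rule f.subspace_image[OF S(1)])
  then have image_S: "f ` S = UNIV"
    using \<open>perfect smultL n brL\<close> unfolding perfect_def by auto
  show ?thesis
  proof (intro set_eqI iffI)
    fix x
    obtain s where "s \<in> S" "f s = f x"
      using image_S by (metis UNIV_I imageE)
    then have "f (x - s) = 0"
      by (simp add: f.diff)
    then have "x - s \<in> S"
      using S(2) by blast
    then have "(x - s) + s \<in> S"
      using f.vs1.subspace_add[OF S(1)] \<open>s \<in> S\<close> by blast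
    then show "x \<in> S" by simp
  qed simp
qed

lemma hom_image_centre_range_subset:
  assumes hom: "hom_leibniz_hom smultK brK alphaK smultL brL alphaL n f" and "surj f"
  shows "f ` centre n brK (range alphaK) \<subseteq> centre n brL (range alphaL)"
proof clarify
  fix x assume x: "x \<in> centre n brK (range alphaK)"
  then obtain k where k: "x = alphaK k"
    unfolding centre_def by blast
  have "brL (ls[i := f x]) = 0"
    if ls: "length ls = n" "set ls \<subseteq> range alphaL" "i < n" for ls i
  proof -
    interpret f: Vector_Spaces.linear smultK smultL f
      by (fact hom_leibniz_homD(1)[OF hom])
    have "\<forall>l \<in> set ls. \<exists>w. l = (f \<circ> alphaK) w"
    proof
      fix l assume "l \<in> set ls"
      then obtain m where "l = alphaL (f m)"
        using ls(2) \<open>surj f\<close> by (metis image_iff subsetD surj_f_inv_f)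
      then show "\<exists>w. l = (f \<circ> alphaK) w"
        using hom_leibniz_homD(3)[OF hom] by auto
    qed
    then obtain ws where ws: "ls = map (f \<circ> alphaK) ws"
      unfolding ex_map_conv[symmetric] by blast
    have "ls[i := f x] = map f ((map alphaK ws)[i := x])"
      using ws by (simp add: map_update)
    moreover have "brK ((map alphaK ws)[i := x]) = 0"
      by (rule centreD[OF x]) (use ws ls in auto)
    ultimately show ?thesis
      using hom_leibniz_homD(2)[OF hom, of "(map alphaK ws)[i := x]"] ws ls by simp
  qed
  moreover have "f x \<in> range alphaL"
    using k hom_leibniz_homD(3)[OF hom] by simp
  ultimately show "f x \<in> centre n brL (range alphaL)"
    unfolding centre_def by blast
qed

lemma centre_of_twist_in_centre_range:
  fixes smult :: "'k::field \<Rightarrow> 'v::ab_group_add \<Rightarrow> 'v"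
  assumes "hom_leibniz_nalg smult n br alpha" "inj alpha"
    and "alpha l \<in> centre n br (range alpha)"
  shows "l \<in> centre n br UNIV"
  unfolding centre_def
proof (intro CollectI conjI allI impI UNIV_I)
  fix ls :: "'v list" and i assume ls: "length ls = n" "set ls \<subseteq> UNIV" "i < n"
  interpret alpha: Vector_Spaces.linear smult smult alpha
    by (fact hom_leibniz_nalgD(2)[OF assms(1)])
  have "alpha (br (ls[i := l])) = br ((map alpha ls)[i := alpha l])"
    using hom_leibniz_nalgD(3)[OF assms(1), of "ls[i := l]"] ls by (simp add: map_update)
  also have "\<dots> = 0"
    by (rule centreD[OF assms(3)]) (use ls in auto)
  finally show "br (ls[i := l]) = 0"
    using \<open>inj alpha\<close> alpha.zero by (metis injD)
qed

lemma bracket_with_central_lift_central: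
  assumes ext: "central_extension smultK brK alphaK smultL brL alphaL n f"
    and "f k \<in> centre n brL UNIV" "length xs = n" "j < n"
  shows "brK (xs[j := k]) \<in> centre n brK UNIV"
proof (rule central_extensionD(3)[OF ext])
  note hom = central_extensionD(1)[OF ext]
  have "f (brK (xs[j := k])) = brL ((map f xs)[j := f k])"
    using hom_leibniz_homD(2)[OF hom, of "xs[j := k]"] assms(3) by (simp add: map_update)
  also have "\<dots> = 0"
    by (rule centreD[OF assms(2)]) (use assms(3,4) in auto)
  finally show "f (brK (xs[j := k])) = 0" .
qed

lemma twisted_bracket_with_central_lift_vanishes:
  fixes smultK :: "'k::field \<Rightarrow> 'v::ab_group_add \<Rightarrow> 'v"
    and smultL :: "'k \<Rightarrow> 'w::ab_group_add \<Rightarrow> 'w"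
  assumes K: "hom_leibniz_nalg smultK n brK alphaK"
    and ext: "central_extension smultK brK alphaK smultL brL alphaL n f"
    and "perfect smultL n brL"
    and fk: "f k \<in> centre n brL UNIV"
    and ys: "length ys = n - 1" "i < n - 1"
  shows "brK (alphaK x # map alphaK (ys[i := k])) = 0"
proof -
  note hom = central_extensionD(1)[OF ext]
  interpret alpha: Vector_Spaces.linear smultK smultK alphaK
    by (fact hom_leibniz_nalgD(2)[OF K])
  define zs where "zs = ys[i := k]"
  have len: "length (alphaK 0 # map alphaK zs) = n"
    using ys unfolding zs_def by simp
  define g where "g x = brK (alphaK x # map alphaK zs)" for x
  have "Vector_Spaces.linear smultK smultK g"
    using Vector_Spaces.linear_compose[OF alpha.linear_axioms
        multilinearD[OF hom_leibniz_nalgD(1)[OF K] len, of 0]] len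
    unfolding g_def by (simp add: o_def)
  then interpret g: Vector_Spaces.linear smultK smultK g .
  have "{x. g x = 0} = UNIV"
  proof (rule subspace_containing_kernel_and_brackets_eq_UNIV[OF
        hom_leibniz_homD(1)[OF hom] central_extensionD(2)[OF ext]
        hom_leibniz_homD(2)[OF hom] \<open>perfect smultL n brL\<close>])
    show "module.subspace smultK {x. g x = 0}"
      by (rule g.subspace_kernel)
  next
    show "{x. f x = 0} \<subseteq> {x. g x = 0}"
    proof clarify
      fix x assume "f x = 0"
      then have "brK ((x # zs)[0 := x]) = 0"
        by (intro centreD[OF central_extensionD(3)[OF ext]]) (use len in auto)
      moreover have "g x = alphaK (brK (x # zs))"
        using hom_leibniz_nalgD(3)[OF K, of "x # zs"] len unfolding g_def by simp
      ultimately show "g x = 0"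
        using alpha.zero by simp
    qed
  next
    show "{brK xs | xs. length xs = n} \<subseteq> {x. g x = 0}"
    proof
      fix z assume "z \<in> {brK xs | xs. length xs = n}"
      then obtain xs where z: "z = brK xs" and xs: "length xs = n"
        by blast
      have term_vanishes:
        "brK ((map alphaK (map alphaK xs))[j := brK (map alphaK xs ! j # zs)]) = 0"
        if "j < n" for j
      proof (rule centreD)
        have "map alphaK xs ! j # zs = (map alphaK xs ! j # ys)[Suc i := k]"
          unfolding zs_def by simp
        then show "brK (map alphaK xs ! j # zs) \<in> centre n brK UNIV"
          using bracket_with_central_lift_central[OF ext fk, of "map alphaK xs ! j # ys" "Suc i"] ys
          by simp
      qed (use xs that in auto)
      have "g (brK xs) = brK (brK (map alphaK xs) # map alphaK zs)"
        using hom_leibniz_nalgD(3)[OF K xs] unfolding g_def by simp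
      also have "\<dots> = (\<Sum>j<n. brK ((map alphaK (map alphaK xs))[j := brK (map alphaK xs ! j # zs)]))"
        using hom_leibniz_nalgD(4)[OF K, of "map alphaK xs" zs] xs ys unfolding zs_def by simp
      also have "\<dots> = 0"
        using term_vanishes by simp
      finally show "z \<in> {x. g x = 0}"
        using z by simp
    qed
  qed
  then show ?thesis
    unfolding g_def zs_def by blast
qed

lemma twist_of_central_lift_in_centre_range:
  fixes smultK :: "'k::field \<Rightarrow> 'v::ab_group_add \<Rightarrow> 'v"
    and smultL :: "'k \<Rightarrow> 'w::ab_group_add \<Rightarrow> 'w"
  assumes "n \<ge> 2"
    and K: "hom_leibniz_nalg smultK n brK alphaK"
    and ext: "central_extension smultK brK alphaK smultL brL alphaL n f"
    and perf: "perfect smultL n brL"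
    and fk: "f k \<in> centre n brL UNIV"
    and "condition_C n brK alphaK"
  shows "alphaK k \<in> centre n brK (range alphaK)"
  unfolding centre_def
proof (intro CollectI conjI allI impI rangeI)
  fix zs :: "'v list" and i assume zs: "length zs = n" "set zs \<subseteq> range alphaK" "i < n"
  have off_head: "brK (alphaK x # map alphaK (ys[j := k])) = 0"
    if "length ys = n - 1" "j < n - 1" for x ys j
    using twisted_bracket_with_central_lift_vanishes[OF K ext perf fk that] .
  have "\<forall>z \<in> set zs. \<exists>w. z = alphaK w"
    using zs(2) by blast
  then obtain ws where ws: "zs = map alphaK ws"
    unfolding ex_map_conv[symmetric] by blast
  have "Suc (Suc 0) \<le> length ws"
    using ws zs(1) \<open>n \<ge> 2\<close> by simp
  then obtain w0 w1 R where "ws = w0 # w1 # R"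
    unfolding Suc_le_length_iff by blast
  with ws zs(1) have R: "ws = w0 # w1 # R" "length R = n - 2"
    by auto
  show "brK (zs[i := alphaK k]) = 0"
  proof (cases i)
    case 0
    have "brK (zs[i := alphaK k]) = brK (alphaK k # alphaK w1 # map alphaK R)"
      using 0 ws R by simp
    also have "\<dots> = - brK (alphaK w1 # alphaK k # map alphaK R)"
      using condition_C_skew[OF \<open>n \<ge> 2\<close> hom_leibniz_nalgD(1,2)[OF K]
          \<open>condition_C n brK alphaK\<close> R(2)] .
    also have "brK (alphaK w1 # alphaK k # map alphaK R) = 0"
      using off_head[of "w0 # R" 0 w1] R(2) \<open>n \<ge> 2\<close> by simp
    finally show ?thesis by simp
  next
    case (Suc j)
    then have "zs[i := alphaK k] = alphaK w0 # map alphaK ((w1 # R)[j := k])"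
      using ws R by (simp add: map_update split: nat.split)
    then show ?thesis
      using off_head[of "w1 # R" j w0] Suc R(2) zs(3) by simp
  qed
qed

theorem proposition5p4:
  fixes smultK :: "'k::field \<Rightarrow> 'v::ab_group_add \<Rightarrow> 'v"
    and smultL :: "'k \<Rightarrow> 'w::ab_group_add \<Rightarrow> 'w"
    and brK :: "'v list \<Rightarrow> 'v" and brL :: "'w list \<Rightarrow> 'w"
    and alphaK :: "'v \<Rightarrow> 'v" and alphaL :: "'w \<Rightarrow> 'w"
    and f :: "'v \<Rightarrow> 'w" and n :: nat
  assumes "n \<ge> 2"
    and "hom_leibniz_nalg smultK n brK alphaK"
    and "hom_leibniz_nalg smultL n brL alphaL"
    and "perfect smultL n brL"
    and "inj alphaL"
    and "central_extension smultK brK alphaK smultL brL alphaL n f"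
    and "condition_C n brK alphaK"
  shows "f ` centre n brK (range alphaK) = centre n brL (range alphaL)"
proof
  note hom = central_extensionD(1)[OF assms(6)]
  show "f ` centre n brK (range alphaK) \<subseteq> centre n brL (range alphaL)"
    using hom_image_centre_range_subset[OF hom central_extensionD(2)[OF assms(6)]] .
  show "centre n brL (range alphaL) \<subseteq> f ` centre n brK (range alphaK)"
  proof
    fix y assume y: "y \<in> centre n brL (range alphaL)"
    then obtain l where l: "y = alphaL l"
      unfolding centre_def by blast
    obtain k where k: "l = f k"
      using central_extensionD(2)[OF assms(6)] by (metis surjD)
    have "f k \<in> centre n brL UNIV"
      using centre_of_twist_in_centre_range[OF assms(3,5)] y l k by simp
    then have "alphaK k \<in> centre n brK (range alphaK)"
      by (rule twist_of_central_lift_in_centre_range[OF assms(1,2,6,4) _ assms(7)])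
    moreover have "f (alphaK k) = y"
      using hom_leibniz_homD(3)[OF hom] k l by simp
    ultimately show "y \<in> f ` centre n brK (range alphaK)"
      by blast
  qed
qed

end
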